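(* Let $G$ be a finite connected graph with girth at least $5$ and $\gamma(G)>\delta(G)$, and let $H$ be the graph obtained from $G$ by subdividing every edge of $G$ exactly once. Then $\mathrm{cc}(H)\ge \delta(G)+1$.
   Context: All graphs are finite, connected and reflexive (a loop at every vertex; moving along a loop means passing); loops are ignored for girth, degrees and neighbourhoods. $\gamma$ denotes domination number and $\delta$ minimum degree. Cops and Attacking Robbers: the cop player places $k$ cops on vertices, then the robber chooses a vertex. In each round the cops move (each cop moves to an adjacent vertex or passes), then the robber moves (to an adjacent vertex or passes). The cops win if after finitely many moves a cop moves onto the robber's vertex. Additionally, if the robber moves onto a vertex occupied by a cop, exactly one cop on that vertex is removed from the game; the robber's initial placement on a cop's vertex does not count as an attack. Both players play optimally. The attacking cop number $\mathrm{cc}(G)$ is the least $k$ such that $k$ cops can guarantee a win. *)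

theory Defs
  imports Main "HOL-Library.Extended_Nat"
begin

(* A finite simple graph: vertex set V, symmetric irreflexive edge relation E on V.
   Loops (reflexivity) are handled in the game, not in E. *)
definition simple_graph :: "'a set \<Rightarrow> ('a \<Rightarrow> 'a \<Rightarrow> bool) \<Rightarrow> bool" where
  "simple_graph V E \<longleftrightarrow> finite V \<and> V \<noteq> {} \<and>
     (\<forall>u v. E u v \<longrightarrow> u \<in> V \<and> v \<in> V) \<and>
     (\<forall>u v. E u v \<longrightarrow> E v u) \<and> (\<forall>v. \<not> E v v)"

definition connected_graph :: "'a set \<Rightarrow> ('a \<Rightarrow> 'a \<Rightarrow> bool) \<Rightarrow> bool" where
  "connected_graph V E \<longleftrightarrow> (\<forall>u\<in>V. \<forall>v\<in>V. E\<^sup>*\<^sup>* u v)"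

definition degree :: "('a \<Rightarrow> 'a \<Rightarrow> bool) \<Rightarrow> 'a \<Rightarrow> nat" where
  "degree E v = card {u. E v u}"

definition min_degree :: "'a set \<Rightarrow> ('a \<Rightarrow> 'a \<Rightarrow> bool) \<Rightarrow> nat" where
  "min_degree V E = Min (degree E ` V)"

definition dominating :: "'a set \<Rightarrow> ('a \<Rightarrow> 'a \<Rightarrow> bool) \<Rightarrow> 'a set \<Rightarrow> bool" where
  "dominating V E D \<longleftrightarrow> D \<subseteq> V \<and> (\<forall>v\<in>V. v \<in> D \<or> (\<exists>u\<in>D. E v u))"

definition domination_number :: "'a set \<Rightarrow> ('a \<Rightarrow> 'a \<Rightarrow> bool) \<Rightarrow> nat" where
  "domination_number V E = Min (card ` {D. dominating V E D})"

definition is_cycle :: "'a set \<Rightarrow> ('a \<Rightarrow> 'a \<Rightarrow> bool) \<Rightarrow> 'a list \<Rightarrow> bool" where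
  "is_cycle V E xs \<longleftrightarrow> length xs \<ge> 3 \<and> distinct xs \<and> set xs \<subseteq> V \<and>
     (\<forall>i < length xs. E (xs ! i) (xs ! ((i + 1) mod length xs)))"

(* girth = length of a shortest cycle; infinity if acyclic *)
definition girth :: "'a set \<Rightarrow> ('a \<Rightarrow> 'a \<Rightarrow> bool) \<Rightarrow> enat" where
  "girth V E = Inf {enat (length xs) | xs. is_cycle V E xs}"

(* subdivision: every edge {u,v} replaced by a new vertex Inr {u,v} adjacent to Inl u and Inl v *)
definition sub_edges :: "('a \<Rightarrow> 'a \<Rightarrow> bool) \<Rightarrow> 'a set set" where
  "sub_edges E = {{u, v} | u v. E u v}"

definition subdiv_V :: "'a set \<Rightarrow> ('a \<Rightarrow> 'a \<Rightarrow> bool) \<Rightarrow> ('a + 'a set) set" where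
  "subdiv_V V E = Inl ` V \<union> Inr ` sub_edges E"

definition subdiv_E :: "('a \<Rightarrow> 'a \<Rightarrow> bool) \<Rightarrow> ('a + 'a set) \<Rightarrow> ('a + 'a set) \<Rightarrow> bool" where
  "subdiv_E E x y \<longleftrightarrow> (\<exists>u e. e \<in> sub_edges E \<and> u \<in> e \<and>
      ((x = Inl u \<and> y = Inr e) \<or> (x = Inr e \<and> y = Inl u)))"

(* Cop positions are a list (one entry per remaining cop).
   cop_win V E cs r: it is the cops' turn, cops at cs, robber at r, and the cops can force
   a win in finitely many moves (least fixed point).  Otherwise the robber
   moves to r' (adjacent or stays); if r' holds cops, exactly one cop there is removed. *)
inductive cop_win :: "'a set \<Rightarrow> ('a \<Rightarrow> 'a \<Rightarrow> bool) \<Rightarrow> 'a list \<Rightarrow> 'a \<Rightarrow> bool"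
  for V E where
  step: "\<lbrakk> length cs' = length cs;
          \<forall>i < length cs. cs' ! i = cs ! i \<or> E (cs ! i) (cs' ! i);
          r \<in> set cs' \<or>
          (\<forall>r'. (r' = r \<or> E r r') \<longrightarrow> cop_win V E (remove1 r' cs') r') \<rbrakk>
         \<Longrightarrow> cop_win V E cs r"

definition cops_win_with :: "'a set \<Rightarrow> ('a \<Rightarrow> 'a \<Rightarrow> bool) \<Rightarrow> nat \<Rightarrow> bool" where
  "cops_win_with V E k \<longleftrightarrow> (\<exists>cs. length cs = k \<and> set cs \<subseteq> V \<and> (\<forall>r\<in>V. cop_win V E cs r))"

definition attacking_cop_number :: "'a set \<Rightarrow> ('a \<Rightarrow> 'a \<Rightarrow> bool) \<Rightarrow> nat" where
  "attacking_cop_number V E = (LEAST k. cops_win_with V E k)"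

end

theory Submission
  imports Defs
begin

(*
  The robber, facing at most \<delta> cops in the subdivision H, maintains the invariant:
  either he stands on an original vertex v and no cop is at distance at most 1 from v,
  or he stands on the subdivision vertex of an edge vx and no cop is at distance at most 2
  from x.  He can start in such a position because \<delta> < \<gamma>: the cops' shadows in G
  (a cop on a subdivision vertex casts its shadow on one end of the edge) do not dominate G.
  From the middle of vx he steps to x.  At v he steps to the middle of an edge vw for which
  no cop is within distance 2 of w, if there is one.  Otherwise every one of the at least
  \<delta> neighbours of v is blocked by a cop within distance 2 of it, and since the girth is
  at least 5 no cop other than one on v blocks two neighbours; with at most \<delta> cops every
  neighbour is then blocked by exactly one cop.  So if a cop sits on the middle of an edge
  vx, the robber attacks it and afterwards nobody blocks x; if no cop is adjacent to v,
  he stays.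
*)

definition closed_nbhd :: "('b \<Rightarrow> 'b \<Rightarrow> bool) \<Rightarrow> 'b set \<Rightarrow> 'b set" where
  "closed_nbhd E S = {y. \<exists>x\<in>S. y = x \<or> E y x}"

definition cops_move :: "('b \<Rightarrow> 'b \<Rightarrow> bool) \<Rightarrow> 'b list \<Rightarrow> 'b list \<Rightarrow> bool" where
  "cops_move E cs cs' \<longleftrightarrow> length cs' = length cs \<and>
     (\<forall>i < length cs. cs' ! i = cs ! i \<or> E (cs ! i) (cs' ! i))"

lemma cops_move_origin:
  assumes "cops_move E cs cs'" and "c' \<in> set cs'"
  obtains c where "c \<in> set cs" and "c = c' \<or> E c c'"
proof -
  from assms(2) obtain i where "i < length cs'" and "c' = cs' ! i"
    by (auto simp: in_set_conv_nth)
  with assms(1) show thesis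
    using that[of "cs ! i"] by (auto simp: cops_move_def)
qed

lemma cops_move_avoids:
  assumes "cops_move E cs cs'" and "set cs \<inter> closed_nbhd E S = {}"
  shows "set cs' \<inter> S = {}"
proof -
  have "c' \<notin> S" if "c' \<in> set cs'" for c'
    using cops_move_origin[OF assms(1) that] assms(2) by (auto simp: closed_nbhd_def)
  then show ?thesis by blast
qed

lemma not_cop_win_if_robber_invariant:
  assumes "cop_win V E cs r"
    and escape: "\<And>cs cs' r. P cs r \<Longrightarrow> cops_move E cs cs' \<Longrightarrow>
      r \<notin> set cs' \<and> (\<exists>r'. (r' = r \<or> E r r') \<and> P (remove1 r' cs') r')"
  shows "\<not> P cs r"
  using assms(1)
proof (induction rule: cop_win.induct)
  case (step cs' cs r)
  have "cops_move E cs cs'" using step.hyps(1,2) unfolding cops_move_def by blast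
  with escape step show ?case by blast
qed

lemma ex_cops_win_with:
  assumes "finite V"
  shows "\<exists>k. cops_win_with V E k"
proof -
  obtain cs where cs: "set cs = V" using finite_list[OF assms] by blast
  have "cop_win V E cs r" if "r \<in> V" for r
    by (rule cop_win.step[of cs]) (use that cs in auto)
  then show ?thesis unfolding cops_win_with_def using cs by blast
qed

lemma less_attacking_cop_number:
  assumes "finite V"
    and robber_escapes: "\<And>cs. length cs \<le> n \<Longrightarrow> set cs \<subseteq> V \<Longrightarrow> \<exists>r\<in>V. \<not> cop_win V E cs r"
  shows "n < attacking_cop_number V E"
proof (rule ccontr)
  assume le: "\<not> n < attacking_cop_number V E"
  have "cops_win_with V E (attacking_cop_number V E)"
    unfolding attacking_cop_number_def
    using ex_cops_win_with[OF assms(1)] by (rule LeastI_ex)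
  then obtain cs where "length cs = attacking_cop_number V E" "set cs \<subseteq> V"
    and "\<forall>r\<in>V. cop_win V E cs r"
    unfolding cops_win_with_def by blast
  moreover have "length cs \<le> n" using le calculation by simp
  ultimately show False using robber_escapes by blast
qed

lemma domination_number_le_card:
  assumes "finite V" and "dominating V E D"
  shows "domination_number V E \<le> card D"
proof -
  have "finite {D. dominating V E D}"
    by (rule finite_subset[of _ "Pow V"]) (auto simp: dominating_def assms(1))
  with assms(2) show ?thesis unfolding domination_number_def by (auto intro: Min_le)
qed

lemma min_degree_le_degree:
  assumes "finite V" and "v \<in> V"
  shows "min_degree V E \<le> degree E v"
  unfolding min_degree_def using assms by (auto intro: Min_le)

lemma remove1_uncovers_subsingleton_cover:
  assumes "finite N" and cover: "N \<subseteq> (\<Union>c\<in>set cs. B c)" and len: "length cs \<le> card N"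
    and subsingleton: "\<And>c a b. c \<in> set cs \<Longrightarrow> a \<in> B c \<Longrightarrow> b \<in> B c \<Longrightarrow> a = b"
    and c: "c \<in> set cs" "x \<in> B c" and c': "c' \<in> set (remove1 c cs)"
  shows "x \<notin> B c'"
proof
  assume "x \<in> B c'"
  let ?rs = "remove1 c cs"
  have "c' \<in> set cs" using c' set_remove1_subset by fast
  with c \<open>x \<in> B c'\<close> have "B c \<subseteq> B c'" using subsingleton by blast
  have "N \<subseteq> (\<Union>d\<in>set ?rs. B d)"
  proof
    fix y assume "y \<in> N"
    with cover obtain d where "d \<in> set cs" "y \<in> B d" by blast
    with \<open>B c \<subseteq> B c'\<close> c' show "y \<in> (\<Union>d\<in>set ?rs. B d)"
      by (cases "d = c") auto
  qed
  then have "N = (\<Union>d\<in>set ?rs. B d \<inter> N)" by blast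
  also have "card \<dots> \<le> (\<Sum>d\<in>set ?rs. card (B d \<inter> N))"
    by (rule card_UN_le) simp
  also have "\<dots> \<le> (\<Sum>d\<in>set ?rs. 1)"
  proof (rule sum_mono)
    fix d assume "d \<in> set ?rs"
    then have "d \<in> set cs" using set_remove1_subset by fast
    then show "card (B d \<inter> N) \<le> 1"
      using card_le_Suc0_iff_eq[of "B d \<inter> N"] subsingleton \<open>finite N\<close> by auto
  qed
  also have "\<dots> \<le> length ?rs" by (simp add: card_length)
  also have "\<dots> < length cs" using length_pos_if_in_set[OF c(1)] c(1) by (simp add: length_remove1)
  finally show False using len by simp
qed

lemma subdiv_E_Inl_Inl [simp]: "\<not> subdiv_E E (Inl a) (Inl b)"
  and subdiv_E_Inr_Inr [simp]: "\<not> subdiv_E E (Inr e) (Inr f)"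
  and subdiv_E_Inl_Inr [simp]: "subdiv_E E (Inl u) (Inr e) \<longleftrightarrow> e \<in> sub_edges E \<and> u \<in> e"
  and subdiv_E_Inr_Inl [simp]: "subdiv_E E (Inr e) (Inl u) \<longleftrightarrow> e \<in> sub_edges E \<and> u \<in> e"
  by (auto simp: subdiv_E_def)

fun shadow :: "'a + 'a set \<Rightarrow> 'a" where
  "shadow (Inl u) = u"
| "shadow (Inr e) = (SOME u. u \<in> e)"

locale sgraph =
  fixes V :: "'a set" and E :: "'a \<Rightarrow> 'a \<Rightarrow> bool"
  assumes simple: "simple_graph V E"
begin

lemma finite_V: "finite V"
  and edge_in_V: "E u v \<Longrightarrow> u \<in> V \<and> v \<in> V"
  and edge_sym: "E u v \<Longrightarrow> E v u"
  and edge_irrefl: "\<not> E v v"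
  using simple by (auto simp: simple_graph_def)

lemma sub_edge_mem:
  assumes "f \<in> sub_edges E" "x \<in> f" "u \<in> f"
  shows "u = x \<or> E x u"
  using assms edge_sym by (auto simp: sub_edges_def)

lemma sub_edge_in_V: "f \<in> sub_edges E \<Longrightarrow> x \<in> f \<Longrightarrow> x \<in> V"
  using edge_in_V by (auto simp: sub_edges_def)

lemma finite_subdiv_V: "finite (subdiv_V V E)"
proof -
  have "sub_edges E \<subseteq> Pow V" using sub_edge_in_V by blast
  then have "finite (sub_edges E)" using finite_V finite_subset by blast
  then show ?thesis by (simp add: subdiv_V_def finite_V)
qed

lemma sub_edge_other_end:
  assumes "f \<in> sub_edges E" "v \<in> f"
  obtains x where "f = {v, x}" "E v x"
  using assms edge_sym that by (auto simp: sub_edges_def insert_commute)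

abbreviation ball1 :: "'a \<Rightarrow> ('a + 'a set) set" where
  "ball1 v \<equiv> closed_nbhd (subdiv_E E) {Inl v}"

abbreviation ball2 :: "'a \<Rightarrow> ('a + 'a set) set" where
  "ball2 v \<equiv> closed_nbhd (subdiv_E E) (ball1 v)"

lemma ball1_eq: "ball1 v = insert (Inl v) (Inr ` {f \<in> sub_edges E. v \<in> f})"
proof (rule set_eqI)
  fix c
  show "c \<in> ball1 v \<longleftrightarrow> c \<in> insert (Inl v) (Inr ` {f \<in> sub_edges E. v \<in> f})"
    by (cases c) (auto simp: closed_nbhd_def)
qed

lemma ball2_eq:
  "ball2 v = insert (Inl v) (Inl ` {y. E v y} \<union> Inr ` {f \<in> sub_edges E. v \<in> f})"
proof (rule set_eqI)
  fix c
  show "c \<in> ball2 v \<longleftrightarrow> c \<in> insert (Inl v) (Inl ` {y. E v y} \<union> Inr ` {f \<in> sub_edges E. v \<in> f})"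
  proof (cases c)
    case (Inl y)
    have "Inl y \<in> ball2 v \<longleftrightarrow> y = v \<or> (\<exists>f\<in>sub_edges E. v \<in> f \<and> y \<in> f)"
      unfolding ball1_eq by (auto simp: closed_nbhd_def)
    moreover have "E v y \<Longrightarrow> {v, y} \<in> sub_edges E" by (auto simp: sub_edges_def)
    ultimately show ?thesis
      using Inl sub_edge_mem[of _ v y] by auto
  qed (unfold ball1_eq, auto simp: closed_nbhd_def)
qed

lemma shadow_near:
  assumes "c \<in> ball1 v"
  shows "shadow c = v \<or> E v (shadow c)"
proof (cases c)
  case (Inr f)
  with assms have f: "f \<in> sub_edges E" "v \<in> f" by (auto simp: ball1_eq)
  then have "shadow c \<in> f" using Inr by (auto intro: someI)
  with f show ?thesis using sub_edge_mem by blast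
qed (use assms in \<open>auto simp: ball1_eq\<close>)

lemma exists_ball1_without_cops:
  assumes "length cs < domination_number V E"
  shows "\<exists>v\<in>V. set cs \<inter> ball1 v = {}"
proof -
  let ?D = "shadow ` set cs \<inter> V"
  have "card ?D \<le> length cs"
    using card_mono[of "shadow ` set cs" ?D] card_image_le[of "set cs" shadow] card_length[of cs]
    by fastforce
  with assms have "\<not> dominating V E ?D"
    using domination_number_le_card[OF finite_V] by fastforce
  then obtain v where v: "v \<in> V" "v \<notin> ?D" "\<forall>u\<in>?D. \<not> E v u"
    unfolding dominating_def by blast
  have "c \<notin> ball1 v" if "c \<in> set cs" for c
    using shadow_near[of c v] v that edge_in_V by blast
  with v show ?thesis by blast
qed

end

locale girth5_graph = sgraph +
  assumes girth_ge_5: "girth V E \<ge> 5"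
begin

lemma cycle_length_ge_5:
  assumes "is_cycle V E xs"
  shows "length xs \<ge> 5"
proof -
  have "girth V E \<le> enat (length xs)"
    unfolding girth_def by (rule Inf_lower) (use assms in blast)
  with girth_ge_5 have "(5::enat) \<le> enat (length xs)" by (rule order_trans)
  then show ?thesis by (simp add: numeral_eq_enat)
qed

lemma no_triangle:
  assumes "E a b" "E b c" "E c a"
  shows False
proof -
  have "is_cycle V E [a, b, c]"
    unfolding is_cycle_def
  proof (intro conjI allI impI)
    fix i assume "i < length [a, b, c]"
    then have "i = 0 \<or> i = 1 \<or> i = 2" by auto
    then show "E ([a, b, c] ! i) ([a, b, c] ! ((i + 1) mod length [a, b, c]))"
      using assms by auto
  qed (use assms edge_irrefl edge_in_V in auto)
  then show False using cycle_length_ge_5 by fastforce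
qed

lemma no_square:
  assumes "E a b" "E b c" "E c d" "E d a" "a \<noteq> c" "b \<noteq> d"
  shows False
proof -
  have "is_cycle V E [a, b, c, d]"
    unfolding is_cycle_def
  proof (intro conjI allI impI)
    fix i assume "i < length [a, b, c, d]"
    then have "i = 0 \<or> i = 1 \<or> i = 2 \<or> i = 3" by auto
    then show "E ([a, b, c, d] ! i) ([a, b, c, d] ! ((i + 1) mod length [a, b, c, d]))"
      using assms by auto
  qed (use assms edge_irrefl edge_in_V in auto)
  then show False using cycle_length_ge_5 by fastforce
qed

lemma ball2_of_two_neighbours:
  assumes "E v w1" "E v w2" "q \<in> ball2 w1" "q \<in> ball2 w2" "q \<noteq> Inl v"
  shows "w1 = w2"
proof (rule ccontr)
  assume ne: "w1 \<noteq> w2"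
  have nonadjacent: "\<not> E w1 w2" using no_triangle[of v w1 w2] assms(1,2) edge_sym by blast
  show False
  proof (cases q)
    case (Inl u)
    with assms(3-5) have "u \<noteq> v" "u = w1 \<or> E w1 u" "u = w2 \<or> E w2 u"
      by (auto simp: ball2_eq)
    then show False
      using nonadjacent no_square[of v w1 u w2] assms(1,2) ne edge_sym by blast
  next
    case (Inr f)
    with assms(3,4) have "f \<in> sub_edges E" "w1 \<in> f" "w2 \<in> f" by (auto simp: ball2_eq)
    then show False using sub_edge_mem nonadjacent ne by blast
  qed
qed

definition robber_safe :: "('a + 'a set) list \<Rightarrow> 'a + 'a set \<Rightarrow> bool" where
  "robber_safe cs r \<longleftrightarrow> length cs \<le> min_degree V E \<and>
     ((\<exists>v\<in>V. r = Inl v \<and> set cs \<inter> ball1 v = {}) \<or>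
      (\<exists>e\<in>sub_edges E. \<exists>x\<in>e. r = Inr e \<and> set cs \<inter> ball2 x = {}))"

lemma escape_from_edge:
  assumes "e \<in> sub_edges E" "x \<in> e" "set cs \<inter> ball2 x = {}" "length cs \<le> min_degree V E"
    and move: "cops_move (subdiv_E E) cs cs'"
  shows "Inr e \<notin> set cs' \<and> robber_safe (remove1 (Inl x) cs') (Inl x)"
proof -
  have free: "set cs' \<inter> ball1 x = {}" using cops_move_avoids[OF move assms(3)] .
  moreover have "Inr e \<in> ball1 x" "Inl x \<in> ball1 x" using assms(1,2) by (auto simp: ball1_eq)
  ultimately have "Inr e \<notin> set cs'" and "remove1 (Inl x) cs' = cs'"
    by (auto intro: remove1_idem)
  moreover have "x \<in> V" using sub_edge_in_V assms(1,2) .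
  moreover have "length cs' = length cs" using move by (simp add: cops_move_def)
  ultimately show ?thesis
    using assms(4) free by (simp add: robber_safe_def)
qed

lemma attack_sole_blocker:
  assumes "v \<in> V" "Inl v \<notin> set cs" "length cs \<le> min_degree V E"
    and blocked: "\<And>w. E v w \<Longrightarrow> set cs \<inter> ball2 w \<noteq> {}"
    and f: "Inr f \<in> set cs" "f \<in> sub_edges E" "v \<in> f"
  shows "robber_safe (remove1 (Inr f) cs) (Inr f)"
proof -
  obtain x where x: "f = {v, x}" "E v x" using sub_edge_other_end f(2,3) .
  define B where "B c = {w. E v w \<and> c \<in> ball2 w}" for c
  have "finite {w. E v w}"
    using finite_V edge_in_V by (auto intro: finite_subset)
  moreover have "{w. E v w} \<subseteq> (\<Union>c\<in>set cs. B c)"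
    using blocked unfolding B_def by blast
  moreover have "length cs \<le> card {w. E v w}"
    using assms(3) min_degree_le_degree[OF finite_V assms(1), of E] by (simp add: degree_def)
  moreover have "a = b" if "c \<in> set cs" "a \<in> B c" "b \<in> B c" for c a b
  proof -
    have "c \<noteq> Inl v" using that(1) assms(2) by blast
    with that(2,3) show ?thesis using ball2_of_two_neighbours unfolding B_def by blast
  qed
  moreover have "x \<in> B (Inr f)"
    using x f(2) by (auto simp: B_def ball2_eq)
  ultimately have "x \<notin> B c'" if "c' \<in> set (remove1 (Inr f) cs)" for c'
    by (rule remove1_uncovers_subsingleton_cover[OF _ _ _ _ f(1) _ that])
  then have "set (remove1 (Inr f) cs) \<inter> ball2 x = {}"
    using x(2) unfolding B_def by blast
  moreover have "length (remove1 (Inr f) cs) \<le> min_degree V E"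
    using assms(3) by (simp add: length_remove1 le_diff_conv)
  moreover have "x \<in> f" using x(1) by simp
  ultimately show ?thesis
    unfolding robber_safe_def using f(2) by blast
qed

lemma escape_from_vertex:
  assumes "v \<in> V" "set cs \<inter> ball1 v = {}" "length cs \<le> min_degree V E"
    and move: "cops_move (subdiv_E E) cs cs'"
  shows "Inl v \<notin> set cs' \<and>
    (\<exists>r'. (r' = Inl v \<or> subdiv_E E (Inl v) r') \<and> robber_safe (remove1 r' cs') r')"
proof -
  have len: "length cs' \<le> min_degree V E"
    using move assms(3) by (simp add: cops_move_def)
  have v_free: "Inl v \<notin> set cs'"
    using cops_move_avoids[OF move assms(2)] by auto
  consider (free_neighbour) w where "E v w" "set cs' \<inter> ball2 w = {}"
    | (stay) "set cs' \<inter> ball1 v = {}"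
    | (attack) f where "Inr f \<in> set cs'" "f \<in> sub_edges E" "v \<in> f"
        "\<And>w. E v w \<Longrightarrow> set cs' \<inter> ball2 w \<noteq> {}"
    using v_free unfolding ball1_eq by blast
  then have "\<exists>r'. (r' = Inl v \<or> subdiv_E E (Inl v) r') \<and> robber_safe (remove1 r' cs') r'"
  proof cases
    case free_neighbour
    have edge: "{v, w} \<in> sub_edges E" using free_neighbour(1) by (auto simp: sub_edges_def)
    then have "Inr {v, w} \<notin> set cs'" using free_neighbour(2) by (auto simp: ball2_eq)
    then have "remove1 (Inr {v, w}) cs' = cs'" by (rule remove1_idem)
    moreover have "robber_safe cs' (Inr {v, w})"
      unfolding robber_safe_def using edge free_neighbour(2) len by blast
    moreover have "subdiv_E E (Inl v) (Inr {v, w})" using edge by simp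
    ultimately show ?thesis by metis
  next
    case stay
    have "remove1 (Inl v) cs' = cs'" using v_free by (rule remove1_idem)
    moreover have "robber_safe cs' (Inl v)"
      unfolding robber_safe_def using assms(1) stay len by blast
    ultimately show ?thesis by metis
  next
    case attack
    have "subdiv_E E (Inl v) (Inr f)" using attack(2,3) by simp
    with attack_sole_blocker[OF assms(1) v_free len attack(4) attack(1-3)] show ?thesis by blast
  qed
  with v_free show ?thesis by blast
qed

lemma robber_safe_escapes:
  assumes "robber_safe cs r" and "cops_move (subdiv_E E) cs cs'"
  shows "r \<notin> set cs' \<and> (\<exists>r'. (r' = r \<or> subdiv_E E r r') \<and> robber_safe (remove1 r' cs') r')"
proof -
  from assms(1) consider
      (vertex) v where "v \<in> V" "r = Inl v" "set cs \<inter> ball1 v = {}" "length cs \<le> min_degree V E"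
    | (edge) e x where "e \<in> sub_edges E" "x \<in> e" "r = Inr e" "set cs \<inter> ball2 x = {}"
        "length cs \<le> min_degree V E"
    unfolding robber_safe_def by blast
  then show ?thesis
  proof cases
    case vertex
    then show ?thesis using escape_from_vertex[OF vertex(1,3,4) assms(2)] by simp
  next
    case edge
    have "subdiv_E E r (Inl x)" using edge(1-3) by simp
    with escape_from_edge[OF edge(1,2,4,5) assms(2)] edge(3) show ?thesis by blast
  qed
qed

lemma robber_safe_start:
  assumes "length cs \<le> min_degree V E" and "min_degree V E < domination_number V E"
  shows "\<exists>r\<in>subdiv_V V E. robber_safe cs r"
proof -
  obtain v where "v \<in> V" "set cs \<inter> ball1 v = {}"
    using exists_ball1_without_cops[of cs] assms by (meson le_less_trans)
  then show ?thesis using assms(1) by (auto simp: robber_safe_def subdiv_V_def)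
qed

theorem min_degree_less_attacking_cop_number:
  assumes "min_degree V E < domination_number V E"
  shows "min_degree V E < attacking_cop_number (subdiv_V V E) (subdiv_E E)"
proof (rule less_attacking_cop_number[OF finite_subdiv_V])
  fix cs :: "('a + 'a set) list"
  assume "length cs \<le> min_degree V E"
  with assms obtain r where "r \<in> subdiv_V V E" "robber_safe cs r"
    using robber_safe_start by blast
  moreover have "\<not> cop_win (subdiv_V V E) (subdiv_E E) cs r"
    using not_cop_win_if_robber_invariant[where P = robber_safe] robber_safe_escapes
      \<open>robber_safe cs r\<close> by blast
  ultimately show "\<exists>r\<in>subdiv_V V E. \<not> cop_win (subdiv_V V E) (subdiv_E E) cs r"
    by blast
qed

end

theorem lemma3:
  fixes V :: "'a set" and E :: "'a \<Rightarrow> 'a \<Rightarrow> bool"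
  assumes "simple_graph V E"
    and "connected_graph V E"
    and "girth V E \<ge> 5"
    and "domination_number V E > min_degree V E"
  shows "attacking_cop_number (subdiv_V V E) (subdiv_E E) \<ge> min_degree V E + 1"
proof -
  interpret girth5_graph V E
    using assms(1,3) by unfold_locales
  show ?thesis using min_degree_less_attacking_cop_number assms(4) by simp
qed

end
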